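(* Let $f(y\mid\vec x)$ be a conditional density of $Y\in\mathbb R$ given $\vec X=\vec x\in\mathcal X$, continuous as a function of $y$ for every $\vec x$, and suppose $\widehat f=f$. For $\vec x\in\mathcal X$, $t\ge0$ let $g_{\vec x}(t)=\int_{\{y:f(y\mid\vec x)\ge t\}}f(y\mid\vec x)\,dy$, and define the profile distance $d_g(\vec x_a,\vec x_b)=\left(\int_0^\infty (g_{\vec x_a}(t)-g_{\vec x_b}(t))^2\,dt\right)^{1/2}$. For $\vec x\in\mathcal X$ and $\alpha\in(0,1)$ let $t^*(\vec x,\alpha)$ be the cutoff of the oracle band for $f(\cdot\mid\vec x)$ with coverage $1-\alpha$, i.e. the value with $\{y: f(y\mid\vec x)\ge t^*(\vec x,\alpha)\}$ the smallest region with probability $1-\alpha$ (so $g_{\vec x}(t^*(\vec x,\alpha))=1-\alpha$). Let $\sim$ be the equivalence relation $\vec x_a\sim\vec x_b\iff d_g(\vec x_a,\vec x_b)=0$. Then: (i) if $\vec x_a\sim\vec x_b$, then $t^*(\vec x_a,\alpha)=t^*(\vec x_b,\alpha)$ for every $\alpha\in(0,1)$; (ii) if $\sim'$ is any equivalence relation on $\mathcal X$ such that $\vec x_a\sim'\vec x_b$ implies $t^*(\vec x_a,\alpha)=t^*(\vec x_b,\alpha)$ for every $\alpha\in(0,1)$, then $\vec x_a\sim'\vec x_b\Rightarrow\vec x_a\sim\vec x_b$. *)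

theory Defs
  imports "HOL-Analysis.Analysis"
begin

definition cond_density :: "'a set \<Rightarrow> ('a \<Rightarrow> real \<Rightarrow> real) \<Rightarrow> bool" where
  "cond_density X f \<longleftrightarrow> (\<forall>x\<in>X. (\<forall>y. 0 \<le> f x y) \<and> integrable lborel (f x)
      \<and> integral\<^sup>L lborel (f x) = 1)"

definition profile :: "('a \<Rightarrow> real \<Rightarrow> real) \<Rightarrow> 'a \<Rightarrow> real \<Rightarrow> real" where
  "profile f x t = (LINT y:{y. t \<le> f x y}|lborel. f x y)"

definition profile_dist_sq :: "('a \<Rightarrow> real \<Rightarrow> real) \<Rightarrow> 'a \<Rightarrow> 'a \<Rightarrow> ennreal" where
  "profile_dist_sq f a b =
     (\<integral>\<^sup>+ t. indicator {0..} t * ennreal ((profile f a t - profile f b t)\<^sup>2) \<partial>lborel)"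

definition profile_dist :: "('a \<Rightarrow> real \<Rightarrow> real) \<Rightarrow> 'a \<Rightarrow> 'a \<Rightarrow> ereal" where
  "profile_dist f a b =
     (if profile_dist_sq f a b = \<infinity> then \<infinity> else ereal (sqrt (enn2real (profile_dist_sq f a b))))"

text \<open>Oracle cutoff t*(x,\<alpha>): the largest level t \<ge> 0 whose upper level set
  {y. f(y|x) \<ge> t} still has probability at least 1-\<alpha>, i.e. the level giving the
  smallest region of coverage 1-\<alpha>.\<close>
definition oracle_cutoff :: "('a \<Rightarrow> real \<Rightarrow> real) \<Rightarrow> 'a \<Rightarrow> real \<Rightarrow> real" where
  "oracle_cutoff f x \<alpha> = Sup {t. 0 \<le> t \<and> 1 - \<alpha> \<le> profile f x t}"

end

theory Submission
  imports Defs
begin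

text \<open>The profile g of a probability density F is non-increasing, left-continuous, equal to 1
  on the non-positive reals and tends to 0 at infinity. Hence, for a coverage 0 < c \<le> 1, the levels
  t \<ge> 0 with c \<le> g t form the closed interval from 0 to the cutoff for coverage c, so on the
  non-negative reals the profile and the family of cutoffs determine each other. Profile distance 0
  means that the profiles agree almost everywhere on the non-negative reals; since a null set
  contains no interval, the two intervals, and hence the cutoffs, coincide. Conversely, equal
  cutoffs give equal profiles and thus distance 0.\<close>

definition level_mass :: "(real \<Rightarrow> real) \<Rightarrow> real \<Rightarrow> real" where
  "level_mass F t = (LINT y:{y. t \<le> F y}|lborel. F y)"

definition level_cutoff :: "(real \<Rightarrow> real) \<Rightarrow> real \<Rightarrow> real" where
  "level_cutoff F c = Sup {t. 0 \<le> t \<and> c \<le> level_mass F t}"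

lemma profile_eq_level_mass: "profile f x = level_mass (f x)"
  by (simp add: profile_def level_mass_def fun_eq_iff)

lemma oracle_cutoff_eq_level_cutoff: "oracle_cutoff f x \<alpha> = level_cutoff (f x) (1 - \<alpha>)"
  by (simp add: oracle_cutoff_def level_cutoff_def profile_eq_level_mass)

locale probability_density =
  fixes F :: "real \<Rightarrow> real"
  assumes nonneg: "\<And>y. 0 \<le> F y"
    and integrable: "integrable lborel F"
    and integral_eq_1: "integral\<^sup>L lborel F = 1"
begin

lemma borel_measurable [measurable]: "F \<in> borel_measurable borel"
  using integrable by (simp add: borel_measurable_integrable)

lemma set_integrable_upper_level: "set_integrable lborel {y. t \<le> F y} F"
  unfolding set_integrable_def
  using integrable_mult_indicator[of "{y. t \<le> F y}" lborel F] integrable by simp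

lemma level_mass_nonpos:
  assumes "t \<le> 0"
  shows "level_mass F t = 1"
proof -
  have "(\<lambda>y. indicator {y. t \<le> F y} y * F y) = F"
    using assms nonneg by (auto simp: fun_eq_iff indicator_def intro: order_trans)
  then show ?thesis
    using integral_eq_1 by (simp add: level_mass_def set_lebesgue_integral_def)
qed

lemma level_mass_nonneg: "0 \<le> level_mass F t"
  unfolding level_mass_def set_lebesgue_integral_def
  by (rule Bochner_Integration.integral_nonneg) (simp add: nonneg)

lemma level_mass_antimono: "s \<le> t \<Longrightarrow> level_mass F t \<le> level_mass F s"
  unfolding level_mass_def set_lebesgue_integral_def
  using set_integrable_upper_level[unfolded set_integrable_def]
  by (intro integral_mono) (auto simp: indicator_def nonneg)

lemma level_mass_le_1: "level_mass F t \<le> 1"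
  using level_mass_antimono[of "min t 0" t] level_mass_nonpos[of "min t 0"] by simp

lemma borel_measurable_level_mass: "level_mass F \<in> borel_measurable borel"
proof -
  have "(\<lambda>t. - level_mass F t) \<in> borel_measurable borel"
    by (rule borel_measurable_mono) (simp add: mono_def level_mass_antimono)
  then show ?thesis
    using borel_measurable_uminus[of "\<lambda>t. - level_mass F t"] by simp
qed

lemma level_mass_tendsto_0: "(\<lambda>n. level_mass F (real n)) \<longlonglongrightarrow> 0"
proof -
  have "(\<lambda>n. LINT y:{y. real n \<le> F y}|lborel. F y)
      \<longlonglongrightarrow> (LINT y:(\<Inter>n. {y. real n \<le> F y})|lborel. F y)"
    by (rule set_integral_cont_down)
      (measurable, auto simp: decseq_def intro: set_integrable_upper_level)
  moreover have "(\<Inter>n. {y. real n \<le> F y}) = {}"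
  proof (intro equalityI subsetI)
    fix y assume y: "y \<in> (\<Inter>n. {y. real n \<le> F y})"
    obtain n :: nat where "F y < n"
      using reals_Archimedean2 by blast
    moreover from y have "real n \<le> F y"
      by blast
    ultimately show "y \<in> {}"
      by simp
  qed simp
  ultimately show ?thesis
    by (simp add: level_mass_def set_lebesgue_integral_def)
qed

lemma level_mass_left_continuous: "(\<lambda>n. level_mass F (t - 1 / Suc n)) \<longlonglongrightarrow> level_mass F t"
proof -
  have "{y. t - 1 / Suc n \<le> F y} \<subseteq> {y. t - 1 / Suc m \<le> F y}" if "m \<le> n" for m n :: nat
  proof -
    have "t - 1 / Suc m \<le> t - 1 / Suc n"
      using that by (simp add: frac_le)
    then show ?thesis by auto
  qed
  then have dec: "decseq (\<lambda>n. {y. t - 1 / Suc n \<le> F y})"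
    by (simp add: decseq_def)
  have "(\<lambda>n. LINT y:{y. t - 1 / Suc n \<le> F y}|lborel. F y)
      \<longlonglongrightarrow> (LINT y:(\<Inter>n. {y. t - 1 / Suc n \<le> F y})|lborel. F y)"
    by (rule set_integral_cont_down) (measurable, fact dec, rule set_integrable_upper_level)
  moreover have "(\<Inter>n. {y. t - 1 / Suc n \<le> F y}) = {y. t \<le> F y}"
  proof (intro equalityI subsetI)
    fix y assume "y \<in> (\<Inter>n. {y. t - 1 / Suc n \<le> F y})"
    then have approx: "t - 1 / Suc n \<le> F y" for n by simp
    show "y \<in> {y. t \<le> F y}"
    proof (rule ccontr)
      assume "y \<notin> {y. t \<le> F y}"
      then obtain n where "1 / Suc n < t - F y"
        using nat_approx_posE[of "t - F y"] by auto
      with approx[of n] show False by linarith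
    qed
  next
    fix y assume "y \<in> {y. t \<le> F y}"
    then show "y \<in> (\<Inter>n. {y. t - 1 / Suc n \<le> F y})"
      by (simp add: diff_le_eq add_increasing2)
  qed
  ultimately show ?thesis
    by (simp add: level_mass_def)
qed

lemma level_mass_ge_if_ge_below:
  assumes "\<And>s. s < t \<Longrightarrow> c \<le> level_mass F s"
  shows "c \<le> level_mass F t"
proof (rule LIMSEQ_le_const[OF level_mass_left_continuous])
  show "\<exists>N. \<forall>n\<ge>N. c \<le> level_mass F (t - 1 / Suc n)"
    by (intro exI[of _ 0] allI impI assms) simp
qed

lemma le_level_mass_iff_le_level_cutoff:
  assumes c: "0 < c" "c \<le> 1" and "0 \<le> t"
  shows "c \<le> level_mass F t \<longleftrightarrow> t \<le> level_cutoff F c"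
proof -
  define S where "S = {t. 0 \<le> t \<and> c \<le> level_mass F t}"
  have "0 \<in> S"
    using level_mass_nonpos[of 0] c by (simp add: S_def)
  have "eventually (\<lambda>n. level_mass F (real n) < c) sequentially"
    using level_mass_tendsto_0 \<open>0 < c\<close> by (rule order_tendstoD(2))
  then obtain N :: nat where N: "level_mass F N < c"
    unfolding eventually_sequentially by blast
  have bdd: "bdd_above S"
  proof (rule bdd_aboveI)
    fix s assume "s \<in> S"
    then have "c \<le> level_mass F s"
      by (simp add: S_def)
    then show "s \<le> real N"
      using N level_mass_antimono[of "real N" s] by linarith
  qed
  have attained: "c \<le> level_mass F (Sup S)"
  proof (rule level_mass_ge_if_ge_below)
    fix s assume "s < Sup S"
    with \<open>0 \<in> S\<close> obtain u where "u \<in> S" "s < u"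
      using less_cSupD[of S s] by blast
    then show "c \<le> level_mass F s"
      using level_mass_antimono[of s u] by (simp add: S_def)
  qed
  show ?thesis
  proof
    assume "c \<le> level_mass F t"
    then have "t \<in> S"
      using \<open>0 \<le> t\<close> by (simp add: S_def)
    then show "t \<le> level_cutoff F c"
      unfolding level_cutoff_def S_def[symmetric] using bdd by (rule cSup_upper)
  next
    assume "t \<le> level_cutoff F c"
    then show "c \<le> level_mass F t"
      using attained level_mass_antimono[of t "Sup S"] by (simp add: level_cutoff_def S_def)
  qed
qed

lemma level_cutoff_nonneg: "0 < c \<Longrightarrow> c \<le> 1 \<Longrightarrow> 0 \<le> level_cutoff F c"
  using le_level_mass_iff_le_level_cutoff[of c 0] level_mass_nonpos[of 0] by simp

end

lemma probability_density_cond_density: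
  "cond_density X f \<Longrightarrow> x \<in> X \<Longrightarrow> probability_density (f x)"
  by (simp add: cond_density_def probability_density_def)

lemma AE_lborel_ex_between:
  fixes a b :: real
  assumes "AE x in lborel. P x" and "a < b"
  shows "\<exists>x. a < x \<and> x < b \<and> P x"
proof (rule ccontr)
  assume no_witness: "\<not> ?thesis"
  from assms(1) obtain N where N: "{x. \<not> P x} \<subseteq> N" "emeasure lborel N = 0" "N \<in> sets lborel"
    by (auto elim: AE_E)
  have "{a<..<b} \<subseteq> N"
  proof
    fix x assume "x \<in> {a<..<b}"
    with no_witness have "\<not> P x"
      by auto
    with N(1) show "x \<in> N"
      by blast
  qed
  then have "emeasure lborel {a<..<b} \<le> 0"
    using emeasure_mono[of "{a<..<b}" N lborel] N by simp
  with \<open>a < b\<close> show False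
    by simp
qed

lemma level_cutoff_le_if_AE_level_mass_eq:
  assumes F: "probability_density F" and G: "probability_density G"
    and eq: "AE t in lborel. 0 \<le> t \<longrightarrow> level_mass F t = level_mass G t"
    and c: "0 < c" "c \<le> 1"
  shows "level_cutoff F c \<le> level_cutoff G c"
proof (rule ccontr)
  assume "\<not> ?thesis"
  then have "level_cutoff G c < level_cutoff F c"
    by simp
  with AE_lborel_ex_between[OF eq] obtain t where t: "level_cutoff G c < t" "t < level_cutoff F c"
    and eq_t: "0 \<le> t \<longrightarrow> level_mass F t = level_mass G t"
    by blast
  have "0 \<le> t"
    using probability_density.level_cutoff_nonneg[OF G c] t by linarith
  then show False
    using probability_density.le_level_mass_iff_le_level_cutoff[OF F c \<open>0 \<le> t\<close>]
      probability_density.le_level_mass_iff_le_level_cutoff[OF G c \<open>0 \<le> t\<close>] t eq_t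
    by auto
qed

lemma level_cutoff_eq_if_AE_level_mass_eq:
  assumes "probability_density F" "probability_density G"
    and "AE t in lborel. 0 \<le> t \<longrightarrow> level_mass F t = level_mass G t"
    and "0 < c" "c \<le> 1"
  shows "level_cutoff F c = level_cutoff G c"
proof (rule antisym)
  show "level_cutoff F c \<le> level_cutoff G c"
    using assms by (rule level_cutoff_le_if_AE_level_mass_eq)
  have "AE t in lborel. 0 \<le> t \<longrightarrow> level_mass G t = level_mass F t"
    using assms(3) by eventually_elim auto
  then show "level_cutoff G c \<le> level_cutoff F c"
    using assms by (intro level_cutoff_le_if_AE_level_mass_eq)
qed

lemma level_mass_eq_if_level_cutoff_eq:
  assumes F: "probability_density F" and G: "probability_density G"
    and eq: "\<And>c. 0 < c \<Longrightarrow> c < 1 \<Longrightarrow> level_cutoff F c = level_cutoff G c"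
    and "0 \<le> t"
  shows "level_mass F t = level_mass G t"
proof (rule ccontr)
  let ?u = "level_mass F t" and ?v = "level_mass G t"
  assume "?u \<noteq> ?v"
  define c where "c = (?u + ?v) / 2"
  have bounds: "0 \<le> ?u" "?u \<le> 1" "0 \<le> ?v" "?v \<le> 1"
    using F G by (simp_all add: probability_density.level_mass_nonneg probability_density.level_mass_le_1)
  have c: "0 < c" "c < 1"
    using bounds \<open>?u \<noteq> ?v\<close> by (auto simp: c_def)
  have "c \<le> ?u \<longleftrightarrow> c \<le> ?v"
    using probability_density.le_level_mass_iff_le_level_cutoff[OF F, of c t]
      probability_density.le_level_mass_iff_le_level_cutoff[OF G, of c t] eq[OF c] c \<open>0 \<le> t\<close>
    by simp
  then show False
    using \<open>?u \<noteq> ?v\<close> by (cases "?u < ?v") (auto simp: c_def)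
qed

lemma profile_dist_eq_0_iff:
  assumes [measurable]: "profile f a \<in> borel_measurable borel" "profile f b \<in> borel_measurable borel"
  shows "profile_dist f a b = 0 \<longleftrightarrow> (AE t in lborel. 0 \<le> t \<longrightarrow> profile f a t = profile f b t)"
proof -
  have "profile_dist f a b = 0 \<longleftrightarrow> profile_dist_sq f a b = 0"
    by (auto simp: profile_dist_def enn2real_eq_0_iff)
  also have "\<dots> \<longleftrightarrow>
      (AE t in lborel. indicator {0..} t * ennreal ((profile f a t - profile f b t)\<^sup>2) = 0)"
    unfolding profile_dist_sq_def by (rule nn_integral_0_iff_AE) measurable
  also have "\<dots> \<longleftrightarrow> (AE t in lborel. 0 \<le> t \<longrightarrow> profile f a t = profile f b t)"
    by (intro AE_cong) (simp add: indicator_def)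
  finally show ?thesis .
qed

lemma profile_dist_eq_0_iff_AE_level_mass_eq:
  assumes "cond_density X f" "xa \<in> X" "xb \<in> X"
  shows "profile_dist f xa xb = 0 \<longleftrightarrow>
    (AE t in lborel. 0 \<le> t \<longrightarrow> level_mass (f xa) t = level_mass (f xb) t)"
proof -
  have "level_mass (f x) \<in> borel_measurable borel" if "x \<in> X" for x
    using assms(1) that
    by (intro probability_density.borel_measurable_level_mass probability_density_cond_density)
  then show ?thesis
    using profile_dist_eq_0_iff[of f xa xb] assms(2,3) by (simp add: profile_eq_level_mass)
qed

lemma oracle_cutoff_eq_if_profile_dist_eq_0:
  assumes "cond_density X f" "xa \<in> X" "xb \<in> X"
    and "profile_dist f xa xb = 0" and "0 < \<alpha>" "\<alpha> < 1"
  shows "oracle_cutoff f xa \<alpha> = oracle_cutoff f xb \<alpha>"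
proof -
  have "level_cutoff (f xa) (1 - \<alpha>) = level_cutoff (f xb) (1 - \<alpha>)"
  proof (rule level_cutoff_eq_if_AE_level_mass_eq)
    show "probability_density (f xa)" "probability_density (f xb)"
      using assms(1-3) by (auto intro: probability_density_cond_density)
    show "AE t in lborel. 0 \<le> t \<longrightarrow> level_mass (f xa) t = level_mass (f xb) t"
      using assms(4) profile_dist_eq_0_iff_AE_level_mass_eq[OF assms(1-3)] by simp
  qed (use assms(5,6) in auto)
  then show ?thesis
    by (simp add: oracle_cutoff_eq_level_cutoff)
qed

lemma profile_dist_eq_0_if_oracle_cutoff_eq:
  assumes "cond_density X f" "xa \<in> X" "xb \<in> X"
    and eq: "\<And>\<alpha>. 0 < \<alpha> \<Longrightarrow> \<alpha> < 1 \<Longrightarrow> oracle_cutoff f xa \<alpha> = oracle_cutoff f xb \<alpha>"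
  shows "profile_dist f xa xb = 0"
proof -
  have "level_cutoff (f xa) c = level_cutoff (f xb) c" if "0 < c" "c < 1" for c
    using eq[of "1 - c"] that by (simp add: oracle_cutoff_eq_level_cutoff)
  then have "AE t in lborel. 0 \<le> t \<longrightarrow> level_mass (f xa) t = level_mass (f xb) t"
    using assms(1-3)
    by (intro AE_I2 impI level_mass_eq_if_level_cutoff_eq probability_density_cond_density)
  then show ?thesis
    using profile_dist_eq_0_iff_AE_level_mass_eq[OF assms(1-3)] by simp
qed

theorem theorem5:
  fixes X :: "'a set" and f :: "'a \<Rightarrow> real \<Rightarrow> real"
  assumes dens: "cond_density X f"
    and cont: "\<forall>x\<in>X. continuous_on UNIV (f x)"
  shows "(\<forall>xa\<in>X. \<forall>xb\<in>X. profile_dist f xa xb = 0 \<longrightarrow>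
            (\<forall>\<alpha>\<in>{0<..<1}. oracle_cutoff f xa \<alpha> = oracle_cutoff f xb \<alpha>))
       \<and> (\<forall>R. equiv X R \<and>
              (\<forall>(xa, xb)\<in>R. \<forall>\<alpha>\<in>{0<..<1}. oracle_cutoff f xa \<alpha> = oracle_cutoff f xb \<alpha>)
              \<longrightarrow> (\<forall>(xa, xb)\<in>R. profile_dist f xa xb = 0))"
proof (intro conjI ballI impI allI)
  fix xa xb and \<alpha> :: real
  assume "xa \<in> X" "xb \<in> X" "profile_dist f xa xb = 0" "\<alpha> \<in> {0<..<1}"
  with dens show "oracle_cutoff f xa \<alpha> = oracle_cutoff f xb \<alpha>"
    by (auto intro: oracle_cutoff_eq_if_profile_dist_eq_0)
next
  fix R p
  assume R: "equiv X R \<and>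
      (\<forall>(xa, xb)\<in>R. \<forall>\<alpha>\<in>{0<..<1}. oracle_cutoff f xa \<alpha> = oracle_cutoff f xb \<alpha>)"
    and "p \<in> R"
  then obtain xa xb where p: "p = (xa, xb)" "(xa, xb) \<in> R" and "xa \<in> X" "xb \<in> X"
    using equiv_type by (cases p) blast
  moreover have "oracle_cutoff f xa \<alpha> = oracle_cutoff f xb \<alpha>" if "0 < \<alpha>" "\<alpha> < 1" for \<alpha>
    using R p(2) that by fastforce
  ultimately show "case p of (xa, xb) \<Rightarrow> profile_dist f xa xb = 0"
    using profile_dist_eq_0_if_oracle_cutoff_eq[OF dens] by simp
qed

end
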